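(* Let $0<\alpha\le1$ and let $f=f(t,v)$, $u=u(t,v)$ satisfy $f(t,v)\ge0$ and $u(0,v)\le0$ for $t>0$ and almost all $v\in\mathbb{R}^3$. Assume that for some $0<R<\infty$ and all $t>0$, $$\partial_t u-Q(f,u)\le0\ \text{ on } \{|v|>R\},\qquad u\le0\ \text{ on } \{0\le|v|\le R\}.$$ Then $u\le0$ for $t>0$ and almost all $v\in\mathbb{R}^3$.
   Context: $\beta=\frac{1+\alpha}{2}$, $\mathbb{S}^2_+$ a hemisphere, and for $v,v_*\in\mathbb{R}^3$, $n\in\mathbb{S}^2_+$, $v'=v-\beta((v-v_* )\cdot n)n$. The (hard-sphere, inelastic with restitution coefficient $\alpha$) collision operator $Q(f,g)$ is defined by the weak form $$\int_{\mathbb{R}^3}Q(f,g)(v)\phi(v)\,dv=\int_{\mathbb{R}^3}\int_{\mathbb{R}^3}\int_{\mathbb{S}^2_+}|(v-v_* )\cdot n|\,f(v_* )g(v)\,(\phi(v')-\phi(v))\,dn\,dv_*\,dv$$ for test functions $\phi$; equivalently $Q(f,g)=Q^+(f,g)-g\,Lf$ with $Lf(v)=\pi\int|v-v_*|f(v_* )\,dv_*$ and $Q^+(f,g)(v)=\alpha^{-2}\int\int_{\mathbb{S}^2_+}|(v-v_* )\cdot n|f({}'v_* )g({}'v)\,dn\,dv_*$, where ${}'v=v-\gamma((v-v_* )\cdot n)n$, ${}'v_*=v_*+\gamma((v-v_* )\cdot n)n$, $\gamma=\frac12(1+\frac1\alpha)$. Functions are assumed regular enough for these expressions to make sense. *)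

theory Defs
  imports "HOL-Analysis.Analysis"
begin

text \<open>Surface measure on the hemisphere S^2_+ = {n. norm n = 1, n$1 > 0} of the unit
  sphere in R^3, realised via the cone construction: sigma(A) = 3 * lambda({r x. 0<r<=1, x in A}),
  i.e. the push-forward of 3 times Lebesgue measure on the half unit ball under x -> x/|x|.
  Total mass = 2 pi.\<close>
definition hemisphere_measure :: "(real^3) measure" where
  "hemisphere_measure =
     distr (density lborel
              (\<lambda>x. ennreal 3 * indicator {x :: real^3. 0 < norm x \<and> norm x \<le> 1 \<and> 0 < x $ 1} x))
           borel (\<lambda>x. x /\<^sub>R norm x)"

definition post_vel :: "real \<Rightarrow> real^3 \<Rightarrow> real^3 \<Rightarrow> real^3 \<Rightarrow> real^3" where
  "post_vel \<alpha> v vs n = v - ((1 + \<alpha>) / 2) *\<^sub>R (((v - vs) \<bullet> n) *\<^sub>R n)"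

definition Q_weak_rhs :: "real \<Rightarrow> (real^3 \<Rightarrow> real) \<Rightarrow> (real^3 \<Rightarrow> real) \<Rightarrow> (real^3 \<Rightarrow> real) \<Rightarrow> real" where
  "Q_weak_rhs \<alpha> f g \<phi> =
     (\<integral>v. (\<integral>vs. (\<integral>n. \<bar>(v - vs) \<bullet> n\<bar> * f vs * g v * (\<phi> (post_vel \<alpha> v vs n) - \<phi> v)
        \<partial>hemisphere_measure) \<partial>lborel) \<partial>lborel)"

definition is_Q :: "real \<Rightarrow> (real^3 \<Rightarrow> real) \<Rightarrow> (real^3 \<Rightarrow> real) \<Rightarrow> (real^3 \<Rightarrow> real) \<Rightarrow> bool" where
  "is_Q \<alpha> f g q \<longleftrightarrow>
     integrable lborel q \<and>
     (\<forall>\<phi> :: real^3 \<Rightarrow> real. \<phi> \<in> borel_measurable borel \<longrightarrow> bounded (range \<phi>) \<longrightarrow>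
        (\<integral>v. q v * \<phi> v \<partial>lborel) = Q_weak_rhs \<alpha> f g \<phi>)"

end

theory Submission
  imports Defs
begin

text \<open>By the chain rule for the positive part, proved with C^1 approximations of x_+ and
  dominated convergence, for almost every v
  u(t,v)_+ = \<integral> over (0,t] of 1_{u(s,v) > 0} \<partial>_s u(s,v) ds.
  Integrating in v and exchanging the integrals, the mass of u(t)_+ is the time integral of
  \<integral> 1_{u > 0} \<partial>_s u dv. As u \<le> 0 on the ball, the set {u > 0} lies outside it, where
  \<partial>_s u \<le> Q(f,u). Testing the weak form of Q(f,u) with \<phi> = 1_{u > 0} gives the integrand
  |(v - v_*) \<cdot> n| f(v_*) u(v) (\<phi>(v') - \<phi>(v)), which is pointwise nonpositive because
  u(v) (\<phi>(v') - \<phi>(v)) \<le> 0 whatever v' is. Hence \<integral> u(t)_+ dv \<le> 0.\<close>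


definition pos_sq :: "real \<Rightarrow> real" where
  "pos_sq x = (max 0 x)\<^sup>2"

lemma has_real_derivative_pos_sq: "(pos_sq has_real_derivative 2 * max 0 x) (at x)"
proof -
  consider "x < 0" | "x = 0" | "0 < x" by linarith
  then show ?thesis
  proof cases
    case 1
    have "((\<lambda>_. 0) has_real_derivative 2 * max 0 x) (at x)"
      using 1 by simp
    then show ?thesis
      by (rule has_field_derivative_transform_within_open[where S = "{..<0}"])
         (use 1 in \<open>auto simp: pos_sq_def\<close>)
  next
    case 2
    have "\<forall>z. pos_sq z - pos_sq 0 = max 0 z * (z - 0)"
      by (simp add: pos_sq_def max_def power2_eq_square)
    moreover have "isCont (max 0) (0::real)"
      by (intro continuous_intros)
    ultimately show ?thesis
      unfolding 2 CARAT_DERIV by auto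
  next
    case 3
    have "((\<lambda>y. y\<^sup>2) has_real_derivative 2 * max 0 x) (at x)"
      using 3 by (auto intro!: derivative_eq_intros)
    then show ?thesis
      by (rule has_field_derivative_transform_within_open[where S = "{0<..}"])
         (use 3 in \<open>auto simp: pos_sq_def\<close>)
  qed
qed

text \<open>smooth_pos_part c x is the mean of max 0 over [x - c, x].\<close>

definition smooth_pos_part :: "real \<Rightarrow> real \<Rightarrow> real" where
  "smooth_pos_part c x = (pos_sq x - pos_sq (x - c)) / (2 * c)"

definition smooth_pos_part_deriv :: "real \<Rightarrow> real \<Rightarrow> real" where
  "smooth_pos_part_deriv c x = (max 0 x - max 0 (x - c)) / c"

lemma has_real_derivative_smooth_pos_part:
  "(smooth_pos_part c has_real_derivative smooth_pos_part_deriv c x) (at x)"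
proof -
  have "((\<lambda>x. pos_sq (x - c)) has_real_derivative 2 * max 0 (x - c) * 1) (at x)"
    by (rule DERIV_chain2[OF has_real_derivative_pos_sq]) (auto intro!: derivative_eq_intros)
  then have "((\<lambda>x. (pos_sq x - pos_sq (x - c)) / (2 * c)) has_real_derivative
      (2 * max 0 x - 2 * max 0 (x - c) * 1) / (2 * c)) (at x)"
    by (intro DERIV_cdivide DERIV_diff has_real_derivative_pos_sq)
  moreover have "(2 * max 0 x - 2 * max 0 (x - c) * 1) / (2 * c) = smooth_pos_part_deriv c x"
    unfolding smooth_pos_part_deriv_def mult_1_right right_diff_distrib[symmetric]
    by (rule mult_divide_mult_cancel_left) simp
  ultimately show ?thesis
    unfolding smooth_pos_part_def[abs_def] by simp
qed

lemma smooth_pos_part_deriv_bounds: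
  assumes "0 < c"
  shows "0 \<le> smooth_pos_part_deriv c x" "smooth_pos_part_deriv c x \<le> 1"
  using assms by (auto simp: smooth_pos_part_deriv_def max_def field_simps)

lemma smooth_pos_part_above_step:
  assumes "0 < c" "c < x"
  shows "smooth_pos_part c x = x - c / 2" "smooth_pos_part_deriv c x = 1"
  using assms by (auto simp: smooth_pos_part_def smooth_pos_part_deriv_def pos_sq_def
      power2_eq_square field_simps)

lemma smooth_pos_part_nonpos:
  assumes "0 < c" "x \<le> 0"
  shows "smooth_pos_part c x = 0" "smooth_pos_part_deriv c x = 0"
  using assms by (auto simp: smooth_pos_part_def smooth_pos_part_deriv_def pos_sq_def)

lemma eventually_inverse_Suc_less:
  "0 < (x::real) \<Longrightarrow> eventually (\<lambda>i. inverse (real (Suc i)) < x) sequentially"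
  using order_tendstoD(2)[OF LIMSEQ_inverse_real_of_nat] by simp

lemma LIMSEQ_smooth_pos_part: "(\<lambda>i. smooth_pos_part (inverse (Suc i)) x) \<longlonglongrightarrow> max 0 x"
proof (cases "0 < x")
  case True
  have "(\<lambda>i. x - inverse (real (Suc i)) / 2) \<longlonglongrightarrow> x - 0 / 2"
    by (intro tendsto_intros LIMSEQ_inverse_real_of_nat) simp
  moreover have "eventually (\<lambda>i. x - inverse (real (Suc i)) / 2 = smooth_pos_part (inverse (Suc i)) x) sequentially"
    using eventually_inverse_Suc_less[OF True]
    by eventually_elim (simp add: smooth_pos_part_above_step)
  ultimately show ?thesis
    using True by (simp add: Lim_transform_eventually)
qed (simp add: smooth_pos_part_nonpos)

lemma LIMSEQ_smooth_pos_part_deriv: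
  "(\<lambda>i. smooth_pos_part_deriv (inverse (Suc i)) x) \<longlonglongrightarrow> (if 0 < x then 1 else 0)"
proof (cases "0 < x")
  case True
  have "eventually (\<lambda>i. smooth_pos_part_deriv (inverse (Suc i)) x = 1) sequentially"
    using eventually_inverse_Suc_less[OF True]
    by eventually_elim (simp add: smooth_pos_part_above_step)
  then show ?thesis
    using True by (simp add: tendsto_eventually)
qed (simp add: smooth_pos_part_nonpos)

lemma has_integral_smooth_pos_part_comp:
  fixes h h' :: "real \<Rightarrow> real"
  assumes "a \<le> b" and contf: "continuous_on {a..b} h"
    and der: "\<And>s. s \<in> {a<..<b} \<Longrightarrow> (h has_real_derivative h' s) (at s)"
  shows "((\<lambda>s. smooth_pos_part_deriv c (h s) * h' s) has_integral
      smooth_pos_part c (h b) - smooth_pos_part c (h a)) {a..b}"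
proof (rule fundamental_theorem_of_calculus_interior[OF \<open>a \<le> b\<close>])
  have "continuous_on UNIV (smooth_pos_part c)"
    by (rule DERIV_continuous_on[OF has_real_derivative_smooth_pos_part])
  then show "continuous_on {a..b} (\<lambda>s. smooth_pos_part c (h s))"
    by (rule continuous_on_compose2[OF _ contf]) auto
  show "((\<lambda>s. smooth_pos_part c (h s)) has_vector_derivative smooth_pos_part_deriv c (h s) * h' s) (at s)"
    if "s \<in> {a<..<b}" for s
    using DERIV_chain2[OF has_real_derivative_smooth_pos_part der[OF that]]
    by (simp add: has_real_derivative_iff_has_vector_derivative)
qed

lemma pos_part_diff_eq_set_integral:
  fixes h h' :: "real \<Rightarrow> real"
  assumes "a \<le> b" and contf: "continuous_on {a..b} h"
    and der: "\<And>s. s \<in> {a<..<b} \<Longrightarrow> (h has_real_derivative h' s) (at s)"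
    and bound: "\<And>s. s \<in> {a..b} \<Longrightarrow> \<bar>h' s\<bar> \<le> B"
    and [measurable]: "h \<in> borel_measurable borel" "h' \<in> borel_measurable borel"
  shows "max 0 (h b) - max 0 (h a) = (LINT s:{a..b}|lborel. if 0 < h s then h' s else 0)"
proof -
  have "0 \<le> B"
    using bound[of a] \<open>a \<le> b\<close> by force
  define g where "g i s = smooth_pos_part_deriv (inverse (Suc i)) (h s) * h' s" for i s
  have [measurable]: "g i \<in> borel_measurable lborel" for i
    unfolding g_def smooth_pos_part_deriv_def by measurable
  have int_B: "integrable lborel (\<lambda>s. indicator {a..b} s * B)"
    using borel_integrable_atLeastAtMost'[of a b "\<lambda>_. B"]
    by (simp add: set_integrable_def mult.commute)
  have dom: "norm (indicator {a..b} s * g i s) \<le> indicator {a..b} s * B" for i s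
  proof (cases "s \<in> {a..b}")
    case True
    have "\<bar>smooth_pos_part_deriv (inverse (Suc i)) (h s)\<bar> * \<bar>h' s\<bar> \<le> 1 * B"
      using smooth_pos_part_deriv_bounds[of "inverse (Suc i)" "h s"] bound[OF True]
      by (intro mult_mono) auto
    then show ?thesis
      using True by (simp add: g_def abs_mult)
  qed simp
  have int_g: "set_integrable lborel {a..b} (g i)" for i
    unfolding set_integrable_def
    by (rule Bochner_Integration.integrable_bound[OF int_B]) (use dom \<open>0 \<le> B\<close> in auto)
  have "(\<lambda>i. LINT s:{a..b}|lborel. g i s) \<longlonglongrightarrow> (LINT s:{a..b}|lborel. if 0 < h s then h' s else 0)"
    unfolding set_lebesgue_integral_def
  proof (rule integral_dominated_convergence[OF _ _ int_B])
    show "AE s in lborel. (\<lambda>i. indicator {a..b} s *\<^sub>R g i s) \<longlonglongrightarrow>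
        indicator {a..b} s *\<^sub>R (if 0 < h s then h' s else 0)"
    proof (rule AE_I2)
      fix s
      have "(\<lambda>i. g i s) \<longlonglongrightarrow> (if 0 < h s then 1 else 0) * h' s"
        unfolding g_def by (intro tendsto_mult LIMSEQ_smooth_pos_part_deriv tendsto_const)
      then show "(\<lambda>i. indicator {a..b} s *\<^sub>R g i s) \<longlonglongrightarrow>
          indicator {a..b} s *\<^sub>R (if 0 < h s then h' s else 0)"
        by (intro tendsto_scaleR tendsto_const) (cases "0 < h s"; simp)
    qed
  qed (use dom in auto)
  moreover have "(LINT s:{a..b}|lborel. g i s) =
      smooth_pos_part (inverse (Suc i)) (h b) - smooth_pos_part (inverse (Suc i)) (h a)" for i
  proof -
    have "(LINT s:{a..b}|lborel. g i s) = integral {a..b} (g i)"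
      by (rule set_borel_integral_eq_integral(2)[OF int_g])
    also have "\<dots> = smooth_pos_part (inverse (Suc i)) (h b) - smooth_pos_part (inverse (Suc i)) (h a)"
      unfolding g_def by (intro integral_unique has_integral_smooth_pos_part_comp assms)
    finally show ?thesis .
  qed
  moreover have "(\<lambda>i. smooth_pos_part (inverse (Suc i)) (h b) - smooth_pos_part (inverse (Suc i)) (h a))
      \<longlonglongrightarrow> max 0 (h b) - max 0 (h a)"
    by (intro tendsto_diff LIMSEQ_smooth_pos_part)
  ultimately show ?thesis
    using LIMSEQ_unique by auto
qed

lemma pos_part_eq_integral_Ioc:
  fixes h h' :: "real \<Rightarrow> real"
  assumes "a \<le> b" and "continuous_on {a..b} h"
    and der: "\<And>s. s \<in> {a<..<b} \<Longrightarrow> (h has_real_derivative h' s) (at s)"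
    and bound: "\<And>s. s \<in> {a<..b} \<Longrightarrow> \<bar>h' s\<bar> \<le> B"
    and [measurable]: "h \<in> borel_measurable borel" "h' \<in> borel_measurable borel"
    and "h a \<le> 0"
  shows "max 0 (h b) = (\<integral>s. indicator {a<..b} s * (if 0 < h s then h' s else 0) \<partial>lborel)"
proof -
  \<comment> \<open>h' is not bounded at s = a, so it is replaced by 0 there\<close>
  have "max 0 (h b) - max 0 (h a) =
      (LINT s:{a..b}|lborel. if 0 < h s then (if a < s then h' s else 0) else 0)"
    by (rule pos_part_diff_eq_set_integral[where B = "max 0 B"]) (use assms in \<open>force simp: abs_le_iff\<close>)+
  also have "\<dots> = (\<integral>s. indicator {a<..b} s * (if 0 < h s then h' s else 0) \<partial>lborel)"
    unfolding set_lebesgue_integral_def by (intro Bochner_Integration.integral_cong) (auto simp: indicator_def)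
  finally show ?thesis
    using \<open>h a \<le> 0\<close> by simp
qed

lemma integral_nonpos_AE:
  fixes g :: "'a \<Rightarrow> real"
  assumes "AE x in M. g x \<le> 0"
  shows "integral\<^sup>L M g \<le> 0"
  using integral_nonneg_AE[of "\<lambda>x. - g x" M] assms by simp

lemma Q_weak_rhs_indicator_pos_nonpos:
  assumes "AE v in lborel. 0 \<le> f v"
  shows "Q_weak_rhs \<alpha> f g (indicator {v. 0 < g v}) \<le> 0"
proof -
  have sign: "g v * (indicator {v. 0 < g v} v' - indicator {v. 0 < g v} v) \<le> (0::real)" for v v'
    by (auto simp: indicator_def mult_le_0_iff)
  have slice_nonpos: "AE vs in lborel. (\<integral>n. \<bar>(v - vs) \<bullet> n\<bar> * f vs * g v *
      (indicator {v. 0 < g v} (post_vel \<alpha> v vs n) - indicator {v. 0 < g v} v) \<partial>hemisphere_measure) \<le> 0"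
    for v
    using assms
  proof eventually_elim
    case (elim vs)
    show ?case
      using mult_nonneg_nonpos[OF mult_nonneg_nonneg[OF abs_ge_zero elim] sign]
      by (intro integral_nonpos_AE AE_I2) (simp add: mult.assoc)
  qed
  show ?thesis
    unfolding Q_weak_rhs_def by (rule integral_nonpos_AE[OF AE_I2[OF integral_nonpos_AE[OF slice_nonpos]]])
qed

lemma integral_pos_set_nonpos_if_le_Q:
  assumes Q: "is_Q \<alpha> f g q" and "AE v in lborel. 0 \<le> f v" and [measurable]: "g \<in> borel_measurable borel"
    and "integrable lborel w" and le_Q: "AE v in lborel. 0 < g v \<longrightarrow> w v \<le> q v"
  shows "(\<integral>v. (if 0 < g v then w v else 0) \<partial>lborel) \<le> 0"
proof -
  have pos_set: "{v. 0 < g v} \<in> sets lborel"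
    by measurable
  have "(\<integral>v. (if 0 < g v then w v else 0) \<partial>lborel) \<le> (\<integral>v. q v * indicator {v. 0 < g v} v \<partial>lborel)"
  proof (rule integral_mono_AE)
    have "(\<lambda>v. if 0 < g v then w v else 0) = (\<lambda>v. w v * indicator {v. 0 < g v} v)"
      by (auto simp: indicator_def)
    then show "integrable lborel (\<lambda>v. if 0 < g v then w v else 0)"
      using integrable_real_mult_indicator[OF pos_set \<open>integrable lborel w\<close>] by simp
    show "integrable lborel (\<lambda>v. q v * indicator {v. 0 < g v} v)"
      using Q unfolding is_Q_def by (intro integrable_real_mult_indicator pos_set) auto
  qed (use le_Q in \<open>auto simp: indicator_def\<close>)
  also have "\<dots> = Q_weak_rhs \<alpha> f g (indicator {v. 0 < g v})"
  proof -
    have "range (indicator {v. 0 < g v} :: real^3 \<Rightarrow> real) \<subseteq> {0, 1}"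
      by (auto simp: indicator_def)
    then have "bounded (range (indicator {v. 0 < g v} :: real^3 \<Rightarrow> real))"
      by (rule bounded_subset[rotated]) simp
    then show ?thesis
      using Q unfolding is_Q_def by (auto simp: borel_measurable_indicator_iff)
  qed
  also have "\<dots> \<le> 0"
    by (rule Q_weak_rhs_indicator_pos_nonpos) fact
  finally show ?thesis .
qed

lemma AE_nonpos_of_pos_part_eq_time_integral:
  fixes G :: "real \<Rightarrow> 'a \<Rightarrow> real" and w g :: "'a \<Rightarrow> real"
  assumes "sigma_finite_measure M"
    and [measurable]: "(\<lambda>(s, x). G s x) \<in> borel_measurable (lborel \<Otimes>\<^sub>M M)" "w \<in> borel_measurable M"
    and int_g: "integrable M g"
    and dom: "AE x in M. \<forall>s\<in>{a<..b}. \<bar>G s x\<bar> \<le> g x"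
    and slices: "\<And>s. s \<in> {a<..b} \<Longrightarrow> (\<integral>x. G s x \<partial>M) \<le> 0"
    and pos_part: "AE x in M. max 0 (w x) = (\<integral>s. indicator {a<..b} s * G s x \<partial>lborel)"
  shows "AE x in M. w x \<le> 0"
proof -
  interpret pair_sigma_finite lborel M
    using assms(1) by (simp add: pair_sigma_finite_def sigma_finite_lborel)
  define F where "F s x = indicator {a<..b} s * G s x" for s x
  have [measurable]: "g \<in> borel_measurable M" "(\<lambda>(s, x). F s x) \<in> borel_measurable (lborel \<Otimes>\<^sub>M M)"
    using int_g by (auto simp: F_def)
  have dom_F: "AE x in M. \<bar>F s x\<bar> \<le> indicator {a<..b} s * g x" for s
    using dom by eventually_elim (force simp: F_def indicator_def abs_mult)
  have int_slice: "integrable M (F s)" for s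
  proof (rule Bochner_Integration.integrable_bound[OF integrable_mult_right[OF int_g]])
    show "AE x in M. norm (F s x) \<le> norm (indicator {a<..b} s * g x)"
      using dom_F[of s] by eventually_elim (metis abs_ge_self order_trans real_norm_def)
  qed simp
  have "emeasure lborel {a<..b} < \<infinity>"
    by (cases "a \<le> b") auto
  then have "integrable lborel (\<lambda>s. indicator {a<..b} s * (\<integral>x. g x \<partial>M))"
    by (intro integrable_mult_left integrable_real_indicator) auto
  then have "integrable lborel (\<lambda>s. \<integral>x. norm (F s x) \<partial>M)"
  proof (rule Bochner_Integration.integrable_bound)
    show "AE s in lborel. norm (\<integral>x. norm (F s x) \<partial>M) \<le> norm (indicator {a<..b} s * (\<integral>x. g x \<partial>M))"
    proof (rule AE_I2)
      fix s
      have "(\<integral>x. norm (F s x) \<partial>M) \<le> (\<integral>x. indicator {a<..b} s * g x \<partial>M)"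
        using dom_F int_slice int_g by (intro integral_mono_AE) (auto elim!: eventually_mono)
      then show "norm (\<integral>x. norm (F s x) \<partial>M) \<le> norm (indicator {a<..b} s * (\<integral>x. g x \<partial>M))"
        by simp
    qed
  qed simp
  then have int_F: "integrable (lborel \<Otimes>\<^sub>M M) (\<lambda>(s, x). F s x)"
    using int_slice by (intro Fubini_integrable) auto
  have int_pos_part: "integrable M (\<lambda>x. max 0 (w x))"
  proof (rule integrable_cong_AE_imp[OF integrable_snd[OF int_F]])
    show "AE x in M. (\<integral>s. F s x \<partial>lborel) = max 0 (w x)"
      using pos_part by eventually_elim (simp add: F_def)
  qed simp
  have "(\<integral>x. max 0 (w x) \<partial>M) = (\<integral>x. (\<integral>s. F s x \<partial>lborel) \<partial>M)"
    using pos_part by (intro integral_cong_AE) (auto simp: F_def)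
  also have "\<dots> = (\<integral>s. (\<integral>x. F s x \<partial>M) \<partial>lborel)"
    by (rule Fubini_integral[OF int_F])
  also have "\<dots> \<le> 0"
    by (rule integral_nonpos_AE[OF AE_I2]) (use slices in \<open>simp add: F_def indicator_def\<close>)
  finally have "(\<integral>x. max 0 (w x) \<partial>M) = 0"
    by (intro antisym integral_nonneg_AE) auto
  then have "AE x in M. max 0 (w x) = 0"
    using integral_nonneg_eq_0_iff_AE[OF int_pos_part] by simp
  then show ?thesis
    by eventually_elim simp
qed

theorem lemma3p1:
  fixes \<alpha> R :: real
    and f u ut q :: "real \<Rightarrow> real^3 \<Rightarrow> real"
  assumes alpha: "0 < \<alpha>" "\<alpha> \<le> 1"
    and R: "0 < R"
    and meas_f: "(\<lambda>(t, v). f t v) \<in> borel_measurable borel"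
    and meas_u: "(\<lambda>(t, v). u t v) \<in> borel_measurable borel"
    and meas_ut: "(\<lambda>(t, v). ut t v) \<in> borel_measurable borel"
    and meas_q: "(\<lambda>(t, v). q t v) \<in> borel_measurable borel"
    \<comment> \<open>regularity in time: u(.,v) continuous on [0,oo), with time derivative ut on (0,oo)\<close>
    and cont_u: "AE v in lborel. continuous_on {0..} (\<lambda>s. u s v)"
    and deriv_u: "AE v in lborel. \<forall>t>0. ((\<lambda>s. u s v) has_real_derivative ut t v) (at t)"
    and dom_ut: "\<forall>T>0. \<exists>g. integrable lborel g \<and>
                   (AE v in lborel. \<forall>t\<in>{0<..T}. \<bar>ut t v\<bar> \<le> g v)"
    \<comment> \<open>regularity making the weak form of Q(f,u) meaningful\<close>
    and integ: "\<forall>t>0. integrable (lborel \<Otimes>\<^sub>M lborel \<Otimes>\<^sub>M hemisphere_measure)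
                   (\<lambda>(v, vs, n). \<bar>(v - vs) \<bullet> n\<bar> * f t vs * u t v)"
    \<comment> \<open>q t = Q(f(t,.), u(t,.)) in the weak sense\<close>
    and Q: "\<forall>t>0. is_Q \<alpha> (f t) (u t) (q t)"
    and f_nonneg: "\<forall>t>0. AE v in lborel. 0 \<le> f t v"
    and u0: "AE v in lborel. u 0 v \<le> 0"
    and outer: "\<forall>t>0. AE v in lborel. R < norm v \<longrightarrow> ut t v - q t v \<le> 0"
    and inner: "\<forall>t>0. AE v in lborel. norm v \<le> R \<longrightarrow> u t v \<le> 0"
  shows "\<forall>t>0. AE v in lborel. u t v \<le> 0"
proof (intro allI impI)
  fix t :: real
  assume "0 < t"
  have [measurable]: "(\<lambda>(s, v). u s v) \<in> borel_measurable (borel \<Otimes>\<^sub>M borel)"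
    "(\<lambda>(s, v). ut s v) \<in> borel_measurable (borel \<Otimes>\<^sub>M borel)"
    using meas_u meas_ut by (simp_all add: borel_prod)
  obtain g where int_g: "integrable lborel g" and dom_g: "AE v in lborel. \<forall>s\<in>{0<..t}. \<bar>ut s v\<bar> \<le> g v"
    using dom_ut \<open>0 < t\<close> by blast
  define G where "G s v = (if 0 < u s v then ut s v else 0)" for s v
  have pos_part: "AE v in lborel. max 0 (u t v) = (\<integral>s. indicator {0<..t} s * G s v \<partial>lborel)"
    using cont_u deriv_u dom_g u0
  proof eventually_elim
    case (elim v)
    show ?case
      unfolding G_def
      by (rule pos_part_eq_integral_Ioc[where B = "g v"])
         (use elim \<open>0 < t\<close> in \<open>auto intro: continuous_on_subset\<close>)
  qed
  have slices: "(\<integral>v. G s v \<partial>lborel) \<le> 0" if "s \<in> {0<..t}" for s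
  proof -
    have "AE v in lborel. R < norm v \<longrightarrow> ut s v - q s v \<le> 0" "AE v in lborel. norm v \<le> R \<longrightarrow> u s v \<le> 0"
      using outer inner that by auto
    then have "AE v in lborel. 0 < u s v \<longrightarrow> ut s v \<le> q s v"
      by eventually_elim auto
    moreover have "integrable lborel (ut s)"
      by (rule Bochner_Integration.integrable_bound[OF int_g])
         (use dom_g that in \<open>auto elim!: eventually_mono intro: order_trans[OF _ abs_ge_self]\<close>)
    ultimately show ?thesis
      unfolding G_def using that Q f_nonneg
      by (intro integral_pos_set_nonpos_if_le_Q[where \<alpha> = \<alpha> and f = "f s"]) auto
  qed
  have dom_G: "AE v in lborel. \<forall>s\<in>{0<..t}. \<bar>G s v\<bar> \<le> g v"
    using dom_g by eventually_elim (use \<open>0 < t\<close> in \<open>force simp: G_def\<close>)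
  show "AE v in lborel. u t v \<le> 0"
    by (rule AE_nonpos_of_pos_part_eq_time_integral[OF _ _ _ int_g dom_G slices pos_part])
       (auto simp: G_def sigma_finite_lborel)
qed

end
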